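(* Let $M$ be a matroid whose ground set $E$ is a nonempty finite subset of $\mathbb{N}$, and let $m = m(M) = \max E$. If $m$ is neither a loop nor a coloop of $M$, then \[ \mathcal{S}_{\mathsf{lex}}(M) \;=\; \mathcal{S}_{\mathsf{lex}}(M \backslash m)\;\cup\;\mathcal{S}_{\mathsf{lex}}(M/m)\;\cup\;\Big(m \ast \big(\mathcal{S}_{\mathsf{lex}}(M\backslash m)\cap \mathcal{S}_{\mathsf{lex}}(M/m)\big)\Big). \] If $m$ is a coloop, then $\mathcal{S}_{\mathsf{lex}}(M) = \mathcal{S}_{\mathsf{lex}}(M\backslash m)$, and if $m$ is a loop, then $\mathcal{S}_{\mathsf{lex}}(M) = \mathcal{S}_{\mathsf{lex}}(M/m)$.
   Context: For a matroid $M$ on a finite ground set $E \subset \mathbb{N}$ with set of bases $\mathcal{B}(M)$, its basis configuration is $V_M = \{\mathbf{e}_B : B \in \mathcal{B}(M)\}\subseteq\{0,1\}^E$, where $\mathbf{e}_B$ is the characteristic vector of $B$. Let $I(V_M)\subseteq \mathbb{R}[x_e : e\in E]$ be the vanishing ideal of $V_M$, and use the lexicographic term order with $x_e \succ x_f$ whenever $e<f$ (i.e. $\mathbf{x}^\alpha\succ\mathbf{x}^\beta$ iff at the smallest index where $\alpha$ and $\beta$ differ, $\alpha$ is larger). The lexicographic standard complex is $\mathcal{S}_{\mathsf{lex}}(M) = \{\tau\subseteq E : \mathbf{x}^\tau=\prod_{i\in\tau}x_i \notin \mathrm{in}(I(V_M))\}$, where $\mathrm{in}(I)$ is the initial ideal.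 (If $E=\emptyset$, $\mathcal{S}_{\mathsf{lex}}(M)=\{\emptyset\}$.) $M\backslash m$ and $M/m$ denote deletion and contraction of $m$ (matroids on $E\setminus\{m\}$). For a simplicial complex $K$ and a vertex $v$ not in $K$, the cone is $v\ast K = K\cup\{\sigma\cup\{v\}:\sigma\in K\}$. *)

theory Defs
  imports Complex_Main "HOL-Library.Poly_Mapping"
begin

definition matroid_bases :: "nat set \<Rightarrow> nat set set \<Rightarrow> bool" where
  "matroid_bases E \<B> \<longleftrightarrow> finite E \<and> \<B> \<noteq> {} \<and> (\<forall>B\<in>\<B>. B \<subseteq> E) \<and>
     (\<forall>B1\<in>\<B>. \<forall>B2\<in>\<B>. \<forall>x\<in>B1 - B2. \<exists>y\<in>B2 - B1. insert y (B1 - {x}) \<in> \<B>)"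

definition is_loop :: "nat set set \<Rightarrow> nat \<Rightarrow> bool" where
  "is_loop \<B> e \<longleftrightarrow> (\<forall>B\<in>\<B>. e \<notin> B)"

definition is_coloop :: "nat set set \<Rightarrow> nat \<Rightarrow> bool" where
  "is_coloop \<B> e \<longleftrightarrow> (\<forall>B\<in>\<B>. e \<in> B)"

definition del_bases :: "nat set set \<Rightarrow> nat \<Rightarrow> nat set set" where
  "del_bases \<B> e = (if is_coloop \<B> e then (\<lambda>B. B - {e}) ` \<B> else {B\<in>\<B>. e \<notin> B})"

definition con_bases :: "nat set set \<Rightarrow> nat \<Rightarrow> nat set set" where
  "con_bases \<B> e = (if is_loop \<B> e then \<B> else (\<lambda>B. B - {e}) ` {B\<in>\<B>. e \<in> B})"

type_synonym mpoly = "(nat \<Rightarrow>\<^sub>0 nat) \<Rightarrow>\<^sub>0 real"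

definition poly_ring :: "nat set \<Rightarrow> mpoly set" where
  "poly_ring E = {p. \<forall>\<alpha>\<in>Poly_Mapping.keys p. Poly_Mapping.keys \<alpha> \<subseteq> E}"

definition eval_poly :: "mpoly \<Rightarrow> (nat \<Rightarrow> real) \<Rightarrow> real" where
  "eval_poly p v = (\<Sum>\<alpha>\<in>Poly_Mapping.keys p. Poly_Mapping.lookup p \<alpha> * (\<Prod>i\<in>Poly_Mapping.keys \<alpha>. v i ^ Poly_Mapping.lookup \<alpha> i))"

definition char_vec :: "nat set \<Rightarrow> nat \<Rightarrow> real" where
  "char_vec B i = (if i \<in> B then 1 else 0)"

definition vanishing_ideal :: "nat set \<Rightarrow> nat set set \<Rightarrow> mpoly set" where
  "vanishing_ideal E \<B> = {p \<in> poly_ring E. \<forall>B\<in>\<B>. eval_poly p (char_vec B) = 0}"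

text \<open>Lexographic term order: the library order on exponent vectors (less_fun):
  alpha < beta iff at the smallest index where they differ, beta is larger.
  Hence x_e is larger than x_f whenever e < f.\<close>
definition lead_exp :: "mpoly \<Rightarrow> (nat \<Rightarrow>\<^sub>0 nat)" where
  "lead_exp p = Max (Poly_Mapping.keys p)"

definition monom :: "(nat \<Rightarrow>\<^sub>0 nat) \<Rightarrow> mpoly" where
  "monom \<alpha> = Poly_Mapping.single \<alpha> 1"

definition initial_ideal :: "nat set \<Rightarrow> mpoly set \<Rightarrow> mpoly set" where
  "initial_ideal E I = {(\<Sum>j<(n::nat). q j * monom (lead_exp (f j))) | n q f.
      (\<forall>j<n. q j \<in> poly_ring E \<and> f j \<in> I \<and> f j \<noteq> 0)}"

definition set_monom :: "nat set \<Rightarrow> mpoly" where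
  "set_monom \<tau> = monom (\<Sum>i\<in>\<tau>. Poly_Mapping.single i 1)"

definition lex_standard_complex :: "nat set \<Rightarrow> nat set set \<Rightarrow> nat set set" where
  "lex_standard_complex E \<B> =
     {\<tau>. \<tau> \<subseteq> E \<and> set_monom \<tau> \<notin> initial_ideal E (vanishing_ideal E \<B>)}"

definition cone :: "nat \<Rightarrow> nat set set \<Rightarrow> nat set set" where
  "cone v K = K \<union> {insert v \<sigma> | \<sigma>. \<sigma> \<in> K}"

end

theory Submission
  imports Defs
begin

text \<open>
  On a set V of 0/1 points every polynomial agrees with a combination of squarefree monomials,
  and x^\<tau> lies in the lex initial ideal of I(V) iff, as a function on V, it is a linear
  combination of the lex-smaller squarefree monomials x^\<sigma> with \<sigma> \<subseteq> E. Since m = max E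
  indexes the smallest variable, a function on V is the pair of its restrictions to the points
  avoiding m and (with m removed) to the points containing m, and x^(\<sigma> \<union> {m}) vanishes on
  the former. Splitting the lex-smaller monomials in this way shows that \<tau> with m \<notin> \<tau> is
  standard for V iff it is standard for one of the two parts, and that \<rho> \<union> {m} is standard
  iff \<rho> is standard for both. Apart from finiteness of E nothing about matroids is used;
  loops and coloops are the cases where one of the two parts is empty.
\<close>

section \<open>Linear combinations of squarefree monomials on 0/1 points\<close>

definition set_monom_val :: "nat set \<Rightarrow> nat set \<Rightarrow> real" where
  "set_monom_val \<sigma> B = (if \<sigma> \<subseteq> B then 1 else 0)"

definition in_monom_span :: "nat set set \<Rightarrow> nat set set \<Rightarrow> (nat set \<Rightarrow> real) \<Rightarrow> bool" where
  "in_monom_span V L g \<longleftrightarrow> (\<exists>c. \<forall>B\<in>V. g B = (\<Sum>\<sigma>\<in>L. c \<sigma> * set_monom_val \<sigma> B))"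

text \<open>If m is neither a loop nor a coloop, these are del_bases and con_bases.\<close>

definition avoiding :: "nat \<Rightarrow> nat set set \<Rightarrow> nat set set" where
  "avoiding m V = {B\<in>V. m \<notin> B}"

definition link :: "nat \<Rightarrow> nat set set \<Rightarrow> nat set set" where
  "link m V = (\<lambda>B. B - {m}) ` {B\<in>V. m \<in> B}"

lemma mem_link_iff: "B \<in> link m V \<longleftrightarrow> m \<notin> B \<and> insert m B \<in> V"
  unfolding link_def by (auto simp: insert_absorb)

lemma in_monom_span_no_points: "in_monom_span {} L g"
  by (simp add: in_monom_span_def)

lemma in_monom_span_cong:
  assumes "\<And>B. B \<in> V \<Longrightarrow> g B = h B"
  shows "in_monom_span V L g \<longleftrightarrow> in_monom_span V L h"
  using assms by (simp add: in_monom_span_def)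

lemma in_monom_span_scale_iff:
  "in_monom_span V L (\<lambda>B. a * g B) \<longleftrightarrow> a = 0 \<or> in_monom_span V L g"
proof
  assume "in_monom_span V L (\<lambda>B. a * g B)"
  then obtain c where c: "\<forall>B\<in>V. a * g B = (\<Sum>\<sigma>\<in>L. c \<sigma> * set_monom_val \<sigma> B)"
    unfolding in_monom_span_def by blast
  have "in_monom_span V L g" if "a \<noteq> 0"
    unfolding in_monom_span_def
  proof (intro exI[of _ "\<lambda>\<sigma>. c \<sigma> / a"] ballI)
    fix B assume "B \<in> V"
    then have "g B = (\<Sum>\<sigma>\<in>L. c \<sigma> * set_monom_val \<sigma> B) / a"
      using c that by (simp add: field_simps)
    then show "g B = (\<Sum>\<sigma>\<in>L. c \<sigma> / a * set_monom_val \<sigma> B)"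
      by (simp add: sum_divide_distrib)
  qed
  then show "a = 0 \<or> in_monom_span V L g" by blast
next
  assume "a = 0 \<or> in_monom_span V L g"
  then show "in_monom_span V L (\<lambda>B. a * g B)"
  proof
    assume "a = 0"
    then show ?thesis unfolding in_monom_span_def by (intro exI[of _ "\<lambda>_. 0"]) simp
  next
    assume "in_monom_span V L g"
    then obtain c where "\<forall>B\<in>V. g B = (\<Sum>\<sigma>\<in>L. c \<sigma> * set_monom_val \<sigma> B)"
      unfolding in_monom_span_def by blast
    then show ?thesis unfolding in_monom_span_def
      by (intro exI[of _ "\<lambda>\<sigma>. a * c \<sigma>"]) (simp add: sum_distrib_left mult.assoc)
  qed
qed

lemma in_monom_span_insert:
  assumes "finite L" and "\<rho> \<notin> L"
  shows "in_monom_span V (insert \<rho> L) g \<longleftrightarrow>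
    (\<exists>t. in_monom_span V L (\<lambda>B. g B - t * set_monom_val \<rho> B))"
proof
  assume "in_monom_span V (insert \<rho> L) g"
  then obtain c where "\<forall>B\<in>V. g B = (\<Sum>\<sigma>\<in>insert \<rho> L. c \<sigma> * set_monom_val \<sigma> B)"
    unfolding in_monom_span_def by blast
  then have "in_monom_span V L (\<lambda>B. g B - c \<rho> * set_monom_val \<rho> B)"
    unfolding in_monom_span_def using assms by (intro exI[of _ c]) simp
  then show "\<exists>t. in_monom_span V L (\<lambda>B. g B - t * set_monom_val \<rho> B)" ..
next
  assume "\<exists>t. in_monom_span V L (\<lambda>B. g B - t * set_monom_val \<rho> B)"
  then obtain t c where c: "\<forall>B\<in>V. g B - t * set_monom_val \<rho> B = (\<Sum>\<sigma>\<in>L. c \<sigma> * set_monom_val \<sigma> B)"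
    unfolding in_monom_span_def by blast
  have "(\<Sum>\<sigma>\<in>L. (c(\<rho> := t)) \<sigma> * set_monom_val \<sigma> B) = (\<Sum>\<sigma>\<in>L. c \<sigma> * set_monom_val \<sigma> B)" for B
    using assms(2) by (intro sum.cong) auto
  then show "in_monom_span V (insert \<rho> L) g"
    unfolding in_monom_span_def using c assms by (intro exI[of _ "c(\<rho> := t)"]) (simp add: algebra_simps)
qed

lemma in_monom_span_sum:
  assumes "finite I" and "finite L" and "\<phi> ` I \<subseteq> L"
    and "\<And>B. B \<in> V \<Longrightarrow> g B = (\<Sum>i\<in>I. a i * set_monom_val (\<phi> i) B)"
  shows "in_monom_span V L g"
  unfolding in_monom_span_def
proof (intro exI[of _ "\<lambda>\<sigma>. \<Sum>i | i \<in> I \<and> \<phi> i = \<sigma>. a i"] ballI)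
  fix B assume "B \<in> V"
  have "g B = (\<Sum>i\<in>I. a i * set_monom_val (\<phi> i) B)"
    using assms(4) \<open>B \<in> V\<close> .
  also have "\<dots> = (\<Sum>\<sigma>\<in>L. \<Sum>i | i \<in> I \<and> \<phi> i = \<sigma>. a i * set_monom_val (\<phi> i) B)"
    using assms(1-3) by (rule sum.group[symmetric])
  also have "\<dots> = (\<Sum>\<sigma>\<in>L. (\<Sum>i | i \<in> I \<and> \<phi> i = \<sigma>. a i) * set_monom_val \<sigma> B)"
    by (simp add: sum_distrib_right)
  finally show "g B = \<dots>" .
qed

lemma sum_insert_max_split:
  assumes "finite L" and "\<And>\<sigma>. \<sigma> \<in> L \<Longrightarrow> m \<notin> \<sigma>"
  shows "(\<Sum>\<sigma>\<in>L \<union> insert m ` L. h \<sigma>) = (\<Sum>\<sigma>\<in>L. h \<sigma> + h (insert m \<sigma>))"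
proof -
  have "inj_on (insert m) L"
    using assms(2) by (intro inj_onI) (metis Diff_insert_absorb)
  moreover have "L \<inter> insert m ` L = {}" using assms(2) by auto
  ultimately show ?thesis
    using assms(1) by (simp add: sum.union_disjoint sum.reindex sum.distrib)
qed

lemma set_monom_val_insert_max:
  assumes "m \<notin> \<sigma>" and "m \<notin> B"
  shows "set_monom_val \<sigma> (insert m B) = set_monom_val \<sigma> B"
    and "set_monom_val (insert m \<sigma>) (insert m B) = set_monom_val \<sigma> B"
    and "set_monom_val (insert m \<sigma>) B = 0"
  using assms by (auto simp: set_monom_val_def subset_insert)

lemma in_monom_span_insert_max_splitD:
  assumes "finite L" and notin_L: "\<And>\<sigma>. \<sigma> \<in> L \<Longrightarrow> m \<notin> \<sigma>"
    and "in_monom_span V (L \<union> insert m ` L) g"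
  shows "in_monom_span (avoiding m V) L g" and "in_monom_span (link m V) L (\<lambda>B. g (insert m B))"
proof -
  obtain c where "\<And>B. B \<in> V \<Longrightarrow> g B = (\<Sum>\<sigma>\<in>L \<union> insert m ` L. c \<sigma> * set_monom_val \<sigma> B)"
    using assms(3) unfolding in_monom_span_def by blast
  then have c: "\<And>B. B \<in> V \<Longrightarrow>
      g B = (\<Sum>\<sigma>\<in>L. c \<sigma> * set_monom_val \<sigma> B + c (insert m \<sigma>) * set_monom_val (insert m \<sigma>) B)"
    by (simp only: sum_insert_max_split[OF assms(1,2)])
  show "in_monom_span (avoiding m V) L g"
    unfolding in_monom_span_def avoiding_def
    using c set_monom_val_insert_max(3) notin_L by (intro exI[of _ c]) auto
  show "in_monom_span (link m V) L (\<lambda>B. g (insert m B))"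
    unfolding in_monom_span_def
  proof (intro exI[of _ "\<lambda>\<sigma>. c \<sigma> + c (insert m \<sigma>)"] ballI)
    fix B assume "B \<in> link m V"
    then have "m \<notin> B" "insert m B \<in> V" by (simp_all add: mem_link_iff)
    then show "g (insert m B) = (\<Sum>\<sigma>\<in>L. (c \<sigma> + c (insert m \<sigma>)) * set_monom_val \<sigma> B)"
      using c notin_L by (simp add: set_monom_val_insert_max(1,2) distrib_right)
  qed
qed

lemma in_monom_span_insert_max_splitI:
  assumes "finite L" and notin_L: "\<And>\<sigma>. \<sigma> \<in> L \<Longrightarrow> m \<notin> \<sigma>"
    and "in_monom_span (avoiding m V) L g" and "in_monom_span (link m V) L (\<lambda>B. g (insert m B))"
  shows "in_monom_span V (L \<union> insert m ` L) g"
proof -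
  obtain c0 c1 where
      c0: "\<And>B. B \<in> avoiding m V \<Longrightarrow> g B = (\<Sum>\<sigma>\<in>L. c0 \<sigma> * set_monom_val \<sigma> B)" and
      c1: "\<And>B. B \<in> link m V \<Longrightarrow> g (insert m B) = (\<Sum>\<sigma>\<in>L. c1 \<sigma> * set_monom_val \<sigma> B)"
    using assms(3,4) unfolding in_monom_span_def by blast
  define c where "c \<sigma> = (if m \<in> \<sigma> then c1 (\<sigma> - {m}) - c0 (\<sigma> - {m}) else c0 \<sigma>)" for \<sigma>
  have "g B = (\<Sum>\<sigma>\<in>L. c0 \<sigma> * set_monom_val \<sigma> B + (c1 \<sigma> - c0 \<sigma>) * set_monom_val (insert m \<sigma>) B)"
    if "B \<in> V" for B
  proof (cases "m \<in> B")
    case False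
    then show ?thesis
      using that c0 notin_L by (simp add: avoiding_def set_monom_val_insert_max(3))
  next
    case True
    define B' where "B' = B - {m}"
    have B: "B = insert m B'" "m \<notin> B'" "B' \<in> link m V"
      using True that by (auto simp: B'_def mem_link_iff insert_absorb)
    have "g B = (\<Sum>\<sigma>\<in>L. c1 \<sigma> * set_monom_val \<sigma> B')"
      using c1[OF B(3)] B(1) by simp
    also have "\<dots> = (\<Sum>\<sigma>\<in>L. c0 \<sigma> * set_monom_val \<sigma> B + (c1 \<sigma> - c0 \<sigma>) * set_monom_val (insert m \<sigma>) B)"
      using notin_L B(2) unfolding B(1)
      by (intro sum.cong) (simp_all add: set_monom_val_insert_max(1,2) algebra_simps)
    finally show ?thesis .
  qed
  moreover have "c \<sigma> = c0 \<sigma>" "c (insert m \<sigma>) = c1 \<sigma> - c0 \<sigma>" if "\<sigma> \<in> L" for \<sigma>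
    using notin_L[OF that] by (simp_all add: c_def)
  ultimately show ?thesis
    unfolding in_monom_span_def
    by (intro exI[of _ c]) (simp add: sum_insert_max_split[OF assms(1,2)])
qed

lemma in_monom_span_insert_max_split:
  assumes "finite L" and "\<And>\<sigma>. \<sigma> \<in> L \<Longrightarrow> m \<notin> \<sigma>"
  shows "in_monom_span V (L \<union> insert m ` L) g \<longleftrightarrow>
    in_monom_span (avoiding m V) L g \<and> in_monom_span (link m V) L (\<lambda>B. g (insert m B))"
  using in_monom_span_insert_max_splitD[OF assms] in_monom_span_insert_max_splitI[OF assms] by blast

section \<open>The lexicographic order on finite sets\<close>

definition set_lex_less :: "nat set \<Rightarrow> nat set \<Rightarrow> bool" where
  "set_lex_less \<sigma> \<tau> \<longleftrightarrow> (\<exists>k. k \<in> \<tau> \<and> k \<notin> \<sigma> \<and> (\<forall>j<k. j \<in> \<sigma> \<longleftrightarrow> j \<in> \<tau>))"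

definition lex_smaller :: "nat set \<Rightarrow> nat set \<Rightarrow> nat set set" where
  "lex_smaller E \<tau> = {\<sigma>. \<sigma> \<subseteq> E \<and> set_lex_less \<sigma> \<tau>}"

definition lex_reducible :: "nat set set \<Rightarrow> nat set \<Rightarrow> nat set \<Rightarrow> bool" where
  "lex_reducible V E \<tau> \<longleftrightarrow> in_monom_span V (lex_smaller E \<tau>) (set_monom_val \<tau>)"

lemma set_lex_less_irrefl: "\<not> set_lex_less \<sigma> \<sigma>"
  unfolding set_lex_less_def by auto

lemma set_lex_less_union:
  assumes "set_lex_less \<sigma> \<tau>" and "C \<inter> \<tau> = {}"
  shows "set_lex_less (\<sigma> \<union> C) (\<tau> \<union> C)"
  using assms unfolding set_lex_less_def by blast

lemma finite_lex_smaller: "finite E \<Longrightarrow> finite (lex_smaller E \<tau>)"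
  unfolding lex_smaller_def by (rule finite_subset[of _ "Pow E"]) auto

lemma notin_lex_smaller_remove: "\<sigma> \<in> lex_smaller (E - {m}) \<tau> \<Longrightarrow> m \<notin> \<sigma>"
  unfolding lex_smaller_def by blast

lemma set_lex_less_remove_max:
  assumes le_m: "\<And>x. x \<in> \<sigma> \<union> \<tau> \<Longrightarrow> x \<le> m"
  shows "set_lex_less \<sigma> \<tau> \<longleftrightarrow>
    set_lex_less (\<sigma> - {m}) (\<tau> - {m}) \<or> (\<sigma> - {m} = \<tau> - {m} \<and> m \<notin> \<sigma> \<and> m \<in> \<tau>)"
proof
  assume "set_lex_less \<sigma> \<tau>"
  then obtain k where k: "k \<in> \<tau>" "k \<notin> \<sigma>" "\<forall>j<k. j \<in> \<sigma> \<longleftrightarrow> j \<in> \<tau>"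
    unfolding set_lex_less_def by blast
  show "set_lex_less (\<sigma> - {m}) (\<tau> - {m}) \<or> (\<sigma> - {m} = \<tau> - {m} \<and> m \<notin> \<sigma> \<and> m \<in> \<tau>)"
  proof (cases "k = m")
    case True
    have "x < m" if "x \<in> \<sigma> \<union> \<tau> - {m}" for x
      using le_m that by fastforce
    then have "\<sigma> - {m} = \<tau> - {m}" using k(3) True by blast
    then show ?thesis using True k by blast
  next
    case False
    then have "k < m" using le_m k(1) by fastforce
    then show ?thesis
      unfolding set_lex_less_def using k False by (intro disjI1 exI[of _ k]) auto
  qed
next
  assume "set_lex_less (\<sigma> - {m}) (\<tau> - {m}) \<or> (\<sigma> - {m} = \<tau> - {m} \<and> m \<notin> \<sigma> \<and> m \<in> \<tau>)"
  then show "set_lex_less \<sigma> \<tau>"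
  proof
    assume "set_lex_less (\<sigma> - {m}) (\<tau> - {m})"
    then obtain k where k: "k \<in> \<tau> - {m}" "k \<notin> \<sigma> - {m}" "\<forall>j<k. j \<in> \<sigma> - {m} \<longleftrightarrow> j \<in> \<tau> - {m}"
      unfolding set_lex_less_def by blast
    then have "k < m" using le_m by fastforce
    then show ?thesis
      unfolding set_lex_less_def using k by (intro exI[of _ k]) auto
  next
    assume "\<sigma> - {m} = \<tau> - {m} \<and> m \<notin> \<sigma> \<and> m \<in> \<tau>"
    then show ?thesis
      unfolding set_lex_less_def by (intro exI[of _ m]) blast
  qed
qed

section \<open>Standard monomials and lex-smaller monomials\<close>

definition set_exp :: "nat set \<Rightarrow> (nat \<Rightarrow>\<^sub>0 nat)" where
  "set_exp \<sigma> = (\<Sum>i\<in>\<sigma>. Poly_Mapping.single i 1)"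

lemma set_monom_eq: "set_monom \<sigma> = monom (set_exp \<sigma>)"
  unfolding set_monom_def set_exp_def ..

lemma lookup_set_exp: "finite \<sigma> \<Longrightarrow> Poly_Mapping.lookup (set_exp \<sigma>) i = (if i \<in> \<sigma> then 1 else 0)"
  unfolding set_exp_def lookup_sum lookup_single by (simp add: when_def)

lemma keys_set_exp: "finite \<sigma> \<Longrightarrow> Poly_Mapping.keys (set_exp \<sigma>) = \<sigma>"
  by (auto simp: in_keys_iff lookup_set_exp split: if_splits)

lemma set_lex_less_imp_less_set_exp:
  assumes "finite \<sigma>" and "finite \<tau>" and "set_lex_less \<sigma> \<tau>"
  shows "set_exp \<sigma> < set_exp \<tau>"
proof -
  obtain k where "k \<in> \<tau>" "k \<notin> \<sigma>" "\<forall>j<k. j \<in> \<sigma> \<longleftrightarrow> j \<in> \<tau>"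
    using assms(3) unfolding set_lex_less_def by blast
  then show ?thesis
    unfolding less_poly_mapping.rep_eq less_fun_def
    by (intro exI[of _ k]) (simp add: lookup_set_exp assms)
qed

lemma less_set_exp_imp_set_lex_less:
  assumes "finite A" and "\<alpha> < set_exp A"
  shows "set_lex_less (Poly_Mapping.keys \<alpha>) A"
proof -
  obtain k where k: "Poly_Mapping.lookup \<alpha> k < Poly_Mapping.lookup (set_exp A) k"
      "\<forall>j<k. Poly_Mapping.lookup \<alpha> j = Poly_Mapping.lookup (set_exp A) j"
    using assms(2) unfolding less_poly_mapping.rep_eq less_fun_def by blast
  then have "k \<in> A" "k \<notin> Poly_Mapping.keys \<alpha>"
    by (auto simp: lookup_set_exp assms(1) in_keys_iff split: if_splits)
  moreover have "j \<in> Poly_Mapping.keys \<alpha> \<longleftrightarrow> j \<in> A" if "j < k" for j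
    using k(2) that by (auto simp: in_keys_iff lookup_set_exp assms(1))
  ultimately show ?thesis
    unfolding set_lex_less_def by blast
qed

lemma dvd_set_exp:
  assumes "finite \<tau>" and "set_exp \<tau> = \<gamma> + \<alpha>"
  shows "\<alpha> = set_exp (Poly_Mapping.keys \<alpha>)" and "Poly_Mapping.keys \<alpha> \<subseteq> \<tau>"
proof -
  have le: "Poly_Mapping.lookup \<alpha> i \<le> (if i \<in> \<tau> then 1 else 0)" for i
    using arg_cong[OF assms(2), of "\<lambda>p. Poly_Mapping.lookup p i"]
    by (simp add: lookup_add lookup_set_exp assms(1))
  then show "Poly_Mapping.keys \<alpha> \<subseteq> \<tau>"
    by (metis in_keys_iff le_zero_eq subsetI)
  show "\<alpha> = set_exp (Poly_Mapping.keys \<alpha>)"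
  proof (rule poly_mapping_eqI)
    fix i
    show "Poly_Mapping.lookup \<alpha> i = Poly_Mapping.lookup (set_exp (Poly_Mapping.keys \<alpha>)) i"
      using le[of i] by (auto simp: lookup_set_exp in_keys_iff split: if_splits)
  qed
qed

lemma eval_poly_eq_sum:
  assumes "finite S" and "Poly_Mapping.keys p \<subseteq> S"
  shows "eval_poly p v =
    (\<Sum>\<alpha>\<in>S. Poly_Mapping.lookup p \<alpha> * (\<Prod>i\<in>Poly_Mapping.keys \<alpha>. v i ^ Poly_Mapping.lookup \<alpha> i))"
  unfolding eval_poly_def
  by (rule sum.mono_neutral_left) (use assms in \<open>auto simp: in_keys_iff\<close>)

lemma eval_poly_add: "eval_poly (p + q) v = eval_poly p v + eval_poly q v"
  using keys_add[of p q]
  by (simp add: eval_poly_eq_sum[of "Poly_Mapping.keys p \<union> Poly_Mapping.keys q"]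
      lookup_add sum.distrib distrib_right)

lemma eval_poly_diff: "eval_poly (p - q) v = eval_poly p v - eval_poly q v"
  using keys_diff[of p q]
  by (simp add: eval_poly_eq_sum[of "Poly_Mapping.keys p \<union> Poly_Mapping.keys q"]
      lookup_minus sum_subtractf left_diff_distrib)

lemma eval_poly_sum: "finite I \<Longrightarrow> eval_poly (\<Sum>i\<in>I. p i) v = (\<Sum>i\<in>I. eval_poly (p i) v)"
  by (induction I rule: finite_induct) (simp_all add: eval_poly_add eval_poly_def[of 0])

lemma eval_poly_single:
  "eval_poly (Poly_Mapping.single \<alpha> c) v = c * (\<Prod>i\<in>Poly_Mapping.keys \<alpha>. v i ^ Poly_Mapping.lookup \<alpha> i)"
  by (subst eval_poly_eq_sum[of "{\<alpha>}"]) (auto simp: lookup_single)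

lemma prod_char_vec_power:
  "(\<Prod>i\<in>Poly_Mapping.keys \<alpha>. char_vec B i ^ Poly_Mapping.lookup \<alpha> i) =
    set_monom_val (Poly_Mapping.keys \<alpha>) B"
proof (cases "Poly_Mapping.keys \<alpha> \<subseteq> B")
  case True
  then show ?thesis
    unfolding set_monom_val_def char_vec_def by (intro trans[OF prod.neutral]) auto
next
  case False
  then obtain i where "i \<in> Poly_Mapping.keys \<alpha>" "i \<notin> B" by blast
  then have "(\<Prod>i\<in>Poly_Mapping.keys \<alpha>. char_vec B i ^ Poly_Mapping.lookup \<alpha> i) = 0"
    by (subst prod_zero_iff) (auto simp: char_vec_def in_keys_iff intro!: bexI[of _ i])
  then show ?thesis
    using False unfolding set_monom_val_def by simp
qed

lemma eval_poly_char_vec: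
  "eval_poly p (char_vec B) =
    (\<Sum>\<alpha>\<in>Poly_Mapping.keys p. Poly_Mapping.lookup p \<alpha> * set_monom_val (Poly_Mapping.keys \<alpha>) B)"
  unfolding eval_poly_def prod_char_vec_power ..

lemma one_in_poly_ring: "1 \<in> poly_ring E"
  unfolding poly_ring_def by simp

lemma lead_exp_eqI:
  assumes "Poly_Mapping.lookup p \<alpha> \<noteq> 0" and "\<And>\<beta>. \<beta> \<in> Poly_Mapping.keys p \<Longrightarrow> \<beta> \<le> \<alpha>"
  shows "lead_exp p = \<alpha>"
  unfolding lead_exp_def using assms by (intro Max_eqI) (auto simp: in_keys_iff)

lemma monom_lead_exp_in_initial_ideal:
  assumes "f \<in> I" and "f \<noteq> 0"
  shows "monom (lead_exp f) \<in> initial_ideal E I"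
proof -
  have "monom (lead_exp f) = (\<Sum>j<1::nat. 1 * monom (lead_exp ((\<lambda>_. f) j)))" by simp
  then show ?thesis
    unfolding initial_ideal_def mem_Collect_eq using assms one_in_poly_ring
    by (intro exI[of _ "1::nat"] exI[of _ "\<lambda>_. 1::mpoly"] exI[of _ "\<lambda>_. f"]) simp
qed

lemma lookup_mult_monom_eq_zero:
  fixes q :: mpoly
  assumes "\<nexists>\<gamma>. \<beta> = \<gamma> + \<alpha>"
  shows "Poly_Mapping.lookup (q * monom \<alpha>) \<beta> = 0"
proof -
  have "((1 when \<alpha> = \<alpha>') when \<beta> = \<gamma> + \<alpha>') = (0::real)" for \<gamma> \<alpha>'
    using assms by (auto simp: when_def)
  then show ?thesis
    unfolding monom_def lookup_mult lookup_single by simp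
qed

lemma monom_in_initial_ideal_imp_dvd:
  assumes "monom \<beta> \<in> initial_ideal E I"
  shows "\<exists>f\<in>I. f \<noteq> 0 \<and> (\<exists>\<gamma>. \<beta> = \<gamma> + lead_exp f)"
proof (rule ccontr)
  assume none: "\<not> ?thesis"
  obtain n q f where eq: "monom \<beta> = (\<Sum>j<(n::nat). q j * monom (lead_exp (f j)))"
    and f: "\<forall>j<n. f j \<in> I \<and> f j \<noteq> 0"
    using assms unfolding initial_ideal_def by blast
  have "Poly_Mapping.lookup (monom \<beta>) \<beta> = 0"
    unfolding eq lookup_sum using none f by (intro sum.neutral ballI lookup_mult_monom_eq_zero) auto
  then show False
    by (simp add: monom_def lookup_single)
qed

lemma keys_single_diff_sum_subset:
  "Poly_Mapping.keys (Poly_Mapping.single \<alpha> c - (\<Sum>\<sigma>\<in>L. Poly_Mapping.single (\<beta> \<sigma>) (d \<sigma>)))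
    \<subseteq> insert \<alpha> (\<beta> ` L)"
proof -
  have "Poly_Mapping.keys (Poly_Mapping.single \<alpha> c - (\<Sum>\<sigma>\<in>L. Poly_Mapping.single (\<beta> \<sigma>) (d \<sigma>)))
      \<subseteq> Poly_Mapping.keys (Poly_Mapping.single \<alpha> c) \<union>
        (\<Union>\<sigma>\<in>L. Poly_Mapping.keys (Poly_Mapping.single (\<beta> \<sigma>) (d \<sigma>)))"
    by (rule order.trans[OF keys_diff Un_mono[OF order.refl keys_sum]])
  also have "\<dots> \<subseteq> insert \<alpha> (\<beta> ` L)"
    by (auto split: if_splits)
  finally show ?thesis .
qed

lemma lex_reducible_imp_in_initial_ideal:
  assumes "finite E" and "\<tau> \<subseteq> E" and "lex_reducible V E \<tau>"
  shows "set_monom \<tau> \<in> initial_ideal E (vanishing_ideal E V)"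
proof -
  let ?L = "lex_smaller E \<tau>"
  obtain c where c: "\<And>B. B \<in> V \<Longrightarrow> set_monom_val \<tau> B = (\<Sum>\<sigma>\<in>?L. c \<sigma> * set_monom_val \<sigma> B)"
    using assms(3) unfolding lex_reducible_def in_monom_span_def by blast
  have fin_L: "finite ?L" using assms(1) by (rule finite_lex_smaller)
  have fin_\<tau>: "finite \<tau>" using assms(1,2) by (rule rev_finite_subset)
  have fin_\<sigma>: "finite \<sigma>" "\<sigma> \<subseteq> E" if "\<sigma> \<in> ?L" for \<sigma>
    using that assms(1) finite_subset unfolding lex_smaller_def by blast+
  have less: "set_exp \<sigma> < set_exp \<tau>" if "\<sigma> \<in> ?L" for \<sigma>
    using set_lex_less_imp_less_set_exp[OF fin_\<sigma>(1)[OF that] fin_\<tau>] that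
    unfolding lex_smaller_def by blast
  define f :: mpoly where
    "f = Poly_Mapping.single (set_exp \<tau>) 1 - (\<Sum>\<sigma>\<in>?L. Poly_Mapping.single (set_exp \<sigma>) (c \<sigma>))"
  have keys_f: "Poly_Mapping.keys f \<subseteq> insert (set_exp \<tau>) (set_exp ` ?L)"
    unfolding f_def by (rule keys_single_diff_sum_subset)
  have "Poly_Mapping.keys \<alpha> \<subseteq> E" if "\<alpha> \<in> Poly_Mapping.keys f" for \<alpha>
  proof -
    from keys_f that consider "\<alpha> = set_exp \<tau>" | \<sigma> where "\<sigma> \<in> ?L" "\<alpha> = set_exp \<sigma>" by blast
    then show ?thesis
      by cases (use assms(2) fin_\<sigma> keys_set_exp[OF fin_\<tau>] in \<open>simp_all add: keys_set_exp\<close>)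
  qed
  moreover have "eval_poly f (char_vec B) = 0" if "B \<in> V" for B
    unfolding f_def eval_poly_diff eval_poly_sum[OF fin_L] eval_poly_single prod_char_vec_power
    using c[OF that] fin_\<tau> fin_\<sigma> by (simp add: keys_set_exp)
  ultimately have "f \<in> vanishing_ideal E V"
    unfolding vanishing_ideal_def poly_ring_def by blast
  have "Poly_Mapping.lookup f (set_exp \<tau>) = 1"
    unfolding f_def lookup_minus lookup_sum using less
    by (simp add: lookup_single when_def order.strict_implies_not_eq)
  then have "f \<noteq> 0" by auto
  have "lead_exp f = set_exp \<tau>"
    using keys_f less \<open>Poly_Mapping.lookup f (set_exp \<tau>) = 1\<close>
    by (intro lead_exp_eqI) (auto intro: less_imp_le)
  then show ?thesis
    using monom_lead_exp_in_initial_ideal[OF \<open>f \<in> vanishing_ideal E V\<close> \<open>f \<noteq> 0\<close>]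
    by (simp add: set_monom_eq)
qed

lemma eval_poly_char_vec_mult_set_monom_val:
  "eval_poly p (char_vec B) * set_monom_val C B =
    (\<Sum>\<alpha>\<in>Poly_Mapping.keys p. Poly_Mapping.lookup p \<alpha> * set_monom_val (Poly_Mapping.keys \<alpha> \<union> C) B)"
  unfolding eval_poly_char_vec sum_distrib_right by (simp add: set_monom_val_def mult.assoc)

lemma less_set_exp_imp_lex_smaller:
  assumes "finite A" and "A \<subseteq> \<tau>" and "\<tau> \<subseteq> E" and "Poly_Mapping.keys \<alpha> \<subseteq> E" and "\<alpha> < set_exp A"
  shows "Poly_Mapping.keys \<alpha> \<union> (\<tau> - A) \<in> lex_smaller E \<tau>"
proof -
  have "set_lex_less (Poly_Mapping.keys \<alpha> \<union> (\<tau> - A)) (A \<union> (\<tau> - A))"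
    using less_set_exp_imp_set_lex_less[OF assms(1,5)] by (rule set_lex_less_union) blast
  moreover have "A \<union> (\<tau> - A) = \<tau>" using assms(2) by blast
  ultimately show ?thesis
    unfolding lex_smaller_def using assms(3,4) by auto
qed

lemma lead_exp_set_exp_imp_lex_reducible:
  assumes "finite E" and "\<tau> \<subseteq> E" and "A \<subseteq> \<tau>"
    and f: "f \<in> vanishing_ideal E V" "f \<noteq> 0" and lead: "lead_exp f = set_exp A"
  shows "lex_reducible V E \<tau>"
proof -
  define K where "K = Poly_Mapping.keys f - {set_exp A}"
  define \<phi> where "\<phi> \<alpha> = Poly_Mapping.keys \<alpha> \<union> (\<tau> - A)" for \<alpha> :: "nat \<Rightarrow>\<^sub>0 nat"
  define a where "a = Poly_Mapping.lookup f (set_exp A)"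
  have fin_A: "finite A"
    by (rule finite_subset[OF assms(3) finite_subset[OF assms(2,1)]])
  have "finite (Poly_Mapping.keys f)" "Poly_Mapping.keys f \<noteq> {}"
    using f(2) by simp_all
  then have lead_in_keys: "set_exp A \<in> Poly_Mapping.keys f"
    and less: "\<And>\<alpha>. \<alpha> \<in> K \<Longrightarrow> \<alpha> < set_exp A"
    unfolding K_def lead[symmetric] lead_exp_def by (auto simp: order.not_eq_order_implies_strict)
  then have "a \<noteq> 0"
    unfolding a_def by (simp add: in_keys_iff)
  have "\<phi> (set_exp A) = \<tau>"
    unfolding \<phi>_def keys_set_exp[OF fin_A] using assms(3) by blast
  have "finite K" by (simp add: K_def)
  moreover have "\<phi> ` K \<subseteq> lex_smaller E \<tau>"
    using f(1) less unfolding \<phi>_def K_def vanishing_ideal_def poly_ring_def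
    by (auto intro!: less_set_exp_imp_lex_smaller[OF fin_A assms(3,2)])
  moreover have "set_monom_val \<tau> B = (\<Sum>\<alpha>\<in>K. - Poly_Mapping.lookup f \<alpha> / a * set_monom_val (\<phi> \<alpha>) B)"
    if "B \<in> V" for B
  proof -
    have "0 = eval_poly f (char_vec B) * set_monom_val (\<tau> - A) B"
      using that f(1) unfolding vanishing_ideal_def by simp
    also have "\<dots> = a * set_monom_val \<tau> B + (\<Sum>\<alpha>\<in>K. Poly_Mapping.lookup f \<alpha> * set_monom_val (\<phi> \<alpha>) B)"
      unfolding eval_poly_char_vec_mult_set_monom_val \<phi>_def[symmetric] K_def a_def
      using \<open>\<phi> (set_exp A) = \<tau>\<close> lead_in_keys by (simp add: sum.remove)
    finally have "a * set_monom_val \<tau> B = - (\<Sum>\<alpha>\<in>K. Poly_Mapping.lookup f \<alpha> * set_monom_val (\<phi> \<alpha>) B)"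
      by linarith
    then have "set_monom_val \<tau> B = - (\<Sum>\<alpha>\<in>K. Poly_Mapping.lookup f \<alpha> * set_monom_val (\<phi> \<alpha>) B) / a"
      using \<open>a \<noteq> 0\<close> by (metis nonzero_mult_div_cancel_left)
    then show ?thesis
      unfolding sum_negf[symmetric] sum_divide_distrib by (simp add: field_simps)
  qed
  ultimately show ?thesis
    unfolding lex_reducible_def
    by (intro in_monom_span_sum[OF _ finite_lex_smaller[OF assms(1)]])
qed

lemma in_initial_ideal_imp_lex_reducible:
  assumes "finite E" and "\<tau> \<subseteq> E" and "set_monom \<tau> \<in> initial_ideal E (vanishing_ideal E V)"
  shows "lex_reducible V E \<tau>"
proof -
  obtain f \<gamma> where f: "f \<in> vanishing_ideal E V" "f \<noteq> 0" and dvd: "set_exp \<tau> = \<gamma> + lead_exp f"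
    using monom_in_initial_ideal_imp_dvd assms(3) unfolding set_monom_eq by blast
  have "finite \<tau>" using assms(1,2) by (rule rev_finite_subset)
  note lead = dvd_set_exp[OF this dvd]
  show ?thesis
    using lead_exp_set_exp_imp_lex_reducible[OF assms(1,2) lead(2) f lead(1)] .
qed

lemma lex_standard_complex_eq:
  assumes "finite E"
  shows "lex_standard_complex E V = {\<tau>. \<tau> \<subseteq> E \<and> \<not> lex_reducible V E \<tau>}"
  unfolding lex_standard_complex_def
  using lex_reducible_imp_in_initial_ideal[OF assms] in_initial_ideal_imp_lex_reducible[OF assms]
  by blast

lemma lex_standard_complex_no_points: "finite E \<Longrightarrow> lex_standard_complex E {} = {}"
  by (simp add: lex_standard_complex_eq lex_reducible_def in_monom_span_no_points)

section \<open>Splitting off the largest element\<close>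

locale finite_with_max =
  fixes E :: "nat set" and m :: nat
  assumes finite_E: "finite E" and max_in_E: "m \<in> E" and le_max: "x \<in> E \<Longrightarrow> x \<le> m"
begin

lemma lex_smaller_remove_max:
  assumes "\<tau> \<subseteq> E - {m}"
  shows "lex_smaller E \<tau> = lex_smaller (E - {m}) \<tau> \<union> insert m ` lex_smaller (E - {m}) \<tau>"
proof -
  have less_iff: "set_lex_less \<sigma> \<tau> \<longleftrightarrow> set_lex_less (\<sigma> - {m}) \<tau>" if "\<sigma> \<subseteq> E" for \<sigma>
  proof -
    have "x \<le> m" if "x \<in> \<sigma> \<union> \<tau>" for x
      using that \<open>\<sigma> \<subseteq> E\<close> assms le_max by blast
    moreover have "\<tau> - {m} = \<tau>" "m \<notin> \<tau>" using assms by auto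
    ultimately show ?thesis using set_lex_less_remove_max[of \<sigma> \<tau> m] by simp
  qed
  show ?thesis
  proof (intro set_eqI iffI)
    fix \<sigma> assume "\<sigma> \<in> lex_smaller E \<tau>"
    then have "\<sigma> - {m} \<in> lex_smaller (E - {m}) \<tau>"
      unfolding lex_smaller_def using less_iff by blast
    moreover have "\<sigma> = \<sigma> - {m} \<or> \<sigma> = insert m (\<sigma> - {m})" by blast
    ultimately show "\<sigma> \<in> lex_smaller (E - {m}) \<tau> \<union> insert m ` lex_smaller (E - {m}) \<tau>"
      by (metis UnI1 UnI2 image_eqI)
  next
    fix \<sigma> assume "\<sigma> \<in> lex_smaller (E - {m}) \<tau> \<union> insert m ` lex_smaller (E - {m}) \<tau>"
    then obtain \<sigma>' where \<sigma>': "\<sigma>' \<in> lex_smaller (E - {m}) \<tau>" "\<sigma> = \<sigma>' \<or> \<sigma> = insert m \<sigma>'"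
      by blast
    then have "\<sigma>' \<subseteq> E - {m}" "set_lex_less \<sigma>' \<tau>" unfolding lex_smaller_def by auto
    moreover have "\<sigma> - {m} = \<sigma>'" "\<sigma> \<subseteq> E" using \<sigma>'(2) calculation(1) max_in_E by auto
    ultimately show "\<sigma> \<in> lex_smaller E \<tau>"
      unfolding lex_smaller_def using less_iff by simp
  qed
qed

lemma lex_smaller_insert_max:
  assumes "\<rho> \<subseteq> E - {m}"
  shows "lex_smaller E (insert m \<rho>) = insert \<rho> (lex_smaller E \<rho>)"
proof -
  have "\<rho> - {m} = \<rho>" "m \<notin> \<rho>" using assms by auto
  have "set_lex_less \<sigma> (insert m \<rho>) \<longleftrightarrow> set_lex_less \<sigma> \<rho> \<or> \<sigma> = \<rho>" if "\<sigma> \<subseteq> E" for \<sigma>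
  proof -
    have "x \<le> m" if "x \<in> \<sigma> \<union> insert m \<rho>" for x
      using that \<open>\<sigma> \<subseteq> E\<close> assms le_max max_in_E by blast
    then have "set_lex_less \<sigma> (insert m \<rho>) \<longleftrightarrow> set_lex_less (\<sigma> - {m}) \<rho> \<or> (\<sigma> - {m} = \<rho> \<and> m \<notin> \<sigma>)"
      and "set_lex_less \<sigma> \<rho> \<longleftrightarrow> set_lex_less (\<sigma> - {m}) \<rho>"
      using set_lex_less_remove_max[of \<sigma> "insert m \<rho>" m] set_lex_less_remove_max[of \<sigma> \<rho> m]
        \<open>\<rho> - {m} = \<rho>\<close> \<open>m \<notin> \<rho>\<close>
      by simp_all
    moreover have "\<sigma> - {m} = \<rho> \<and> m \<notin> \<sigma> \<longleftrightarrow> \<sigma> = \<rho>" using \<open>m \<notin> \<rho>\<close> by auto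
    ultimately show ?thesis by blast
  qed
  then show ?thesis
    using assms unfolding lex_smaller_def by auto
qed

lemma lex_reducible_remove_max:
  assumes "\<tau> \<subseteq> E - {m}"
  shows "lex_reducible V E \<tau> \<longleftrightarrow>
    lex_reducible (avoiding m V) (E - {m}) \<tau> \<and> lex_reducible (link m V) (E - {m}) \<tau>"
proof -
  have "set_monom_val \<tau> (insert m B) = set_monom_val \<tau> B" if "B \<in> link m V" for B
    using that assms by (intro set_monom_val_insert_max(1)) (auto simp: mem_link_iff)
  then show ?thesis
    unfolding lex_reducible_def lex_smaller_remove_max[OF assms]
    using finite_E notin_lex_smaller_remove
    by (simp add: in_monom_span_insert_max_split finite_lex_smaller cong: in_monom_span_cong)
qed

lemma lex_reducible_insert_max:
  assumes "\<rho> \<subseteq> E - {m}"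
  shows "lex_reducible V E (insert m \<rho>) \<longleftrightarrow>
    lex_reducible (avoiding m V) (E - {m}) \<rho> \<or> lex_reducible (link m V) (E - {m}) \<rho>"
proof -
  let ?L = "lex_smaller (E - {m}) \<rho>"
  have "m \<notin> \<rho>" using assms by blast
  have fin: "finite ?L" using finite_E by (simp add: finite_lex_smaller)
  have "\<rho> \<notin> ?L \<union> insert m ` ?L"
    using \<open>m \<notin> \<rho>\<close> set_lex_less_irrefl unfolding lex_smaller_def by blast
  then have "lex_reducible V E (insert m \<rho>) \<longleftrightarrow>
      (\<exists>t. in_monom_span V (?L \<union> insert m ` ?L) (\<lambda>B. set_monom_val (insert m \<rho>) B - t * set_monom_val \<rho> B))"
    unfolding lex_reducible_def lex_smaller_insert_max[OF assms]
      lex_smaller_remove_max[OF assms]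
    using fin by (simp add: in_monom_span_insert)
  also have "\<dots> \<longleftrightarrow> (\<exists>t. in_monom_span (avoiding m V) ?L (\<lambda>B. (- t) * set_monom_val \<rho> B) \<and>
      in_monom_span (link m V) ?L (\<lambda>B. (1 - t) * set_monom_val \<rho> B))"
  proof -
    have "set_monom_val (insert m \<rho>) B - t * set_monom_val \<rho> B = (- t) * set_monom_val \<rho> B"
      if "B \<in> avoiding m V" for B t
      using that \<open>m \<notin> \<rho>\<close> by (simp add: avoiding_def set_monom_val_insert_max(3))
    moreover have "set_monom_val (insert m \<rho>) (insert m B) - t * set_monom_val \<rho> (insert m B) =
        (1 - t) * set_monom_val \<rho> B" if "B \<in> link m V" for B t
      using that \<open>m \<notin> \<rho>\<close> by (simp add: mem_link_iff set_monom_val_insert_max(1,2) algebra_simps)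
    ultimately show ?thesis
      using fin notin_lex_smaller_remove
      by (simp add: in_monom_span_insert_max_split cong: in_monom_span_cong)
  qed
  \<comment> \<open>take t = 1 if x^\<rho> is a combination on the avoiding part, t = 0 otherwise\<close>
  also have "\<dots> \<longleftrightarrow> lex_reducible (avoiding m V) (E - {m}) \<rho> \<or> lex_reducible (link m V) (E - {m}) \<rho>"
    unfolding in_monom_span_scale_iff lex_reducible_def by force
  finally show ?thesis .
qed

lemma mem_lex_standard_complex_remove_max:
  assumes "\<tau> \<subseteq> E"
  shows "\<tau> \<in> lex_standard_complex E V \<longleftrightarrow>
    (if m \<in> \<tau>
     then \<tau> - {m} \<in> lex_standard_complex (E - {m}) (avoiding m V) \<inter> lex_standard_complex (E - {m}) (link m V)
     else \<tau> \<in> lex_standard_complex (E - {m}) (avoiding m V) \<union> lex_standard_complex (E - {m}) (link m V))"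
proof -
  have "finite (E - {m})" using finite_E by simp
  note lsc_eq = lex_standard_complex_eq[OF finite_E] lex_standard_complex_eq[OF this]
  show ?thesis
  proof (cases "m \<in> \<tau>")
    case True
    have "\<tau> - {m} \<subseteq> E - {m}" using assms by auto
    then have "lex_reducible V E \<tau> \<longleftrightarrow>
        lex_reducible (avoiding m V) (E - {m}) (\<tau> - {m}) \<or> lex_reducible (link m V) (E - {m}) (\<tau> - {m})"
      using lex_reducible_insert_max[of "\<tau> - {m}" V] True by (simp add: insert_absorb)
    then show ?thesis
      unfolding lsc_eq using True assms \<open>\<tau> - {m} \<subseteq> E - {m}\<close> by auto
  next
    case False
    then have "\<tau> \<subseteq> E - {m}" using assms by auto
    then show ?thesis
      unfolding lsc_eq using False lex_reducible_remove_max by auto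
  qed
qed

lemma lex_standard_complex_remove_max:
  "lex_standard_complex E V =
     lex_standard_complex (E - {m}) (avoiding m V) \<union> lex_standard_complex (E - {m}) (link m V)
     \<union> cone m (lex_standard_complex (E - {m}) (avoiding m V) \<inter> lex_standard_complex (E - {m}) (link m V))"
    (is "_ = ?S0 \<union> ?S1 \<union> cone m (?S0 \<inter> ?S1)")
proof (intro set_eqI iffI)
  fix \<tau> assume \<tau>: "\<tau> \<in> lex_standard_complex E V"
  then have "\<tau> \<subseteq> E" by (simp add: lex_standard_complex_def)
  then have mem: "if m \<in> \<tau> then \<tau> - {m} \<in> ?S0 \<inter> ?S1 else \<tau> \<in> ?S0 \<union> ?S1"
    using \<tau> mem_lex_standard_complex_remove_max by blast
  show "\<tau> \<in> ?S0 \<union> ?S1 \<union> cone m (?S0 \<inter> ?S1)"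
  proof (cases "m \<in> \<tau>")
    case True
    then have "\<tau> = insert m (\<tau> - {m})" by auto
    then show ?thesis
      using mem True unfolding cone_def by auto
  next
    case False
    then show ?thesis using mem by simp
  qed
next
  fix \<tau> assume "\<tau> \<in> ?S0 \<union> ?S1 \<union> cone m (?S0 \<inter> ?S1)"
  then consider "\<tau> \<in> ?S0 \<union> ?S1" | \<sigma> where "\<sigma> \<in> ?S0 \<inter> ?S1" "\<tau> = insert m \<sigma>"
    unfolding cone_def by blast
  then show "\<tau> \<in> lex_standard_complex E V"
  proof cases
    case 1
    then have "\<tau> \<subseteq> E" "m \<notin> \<tau>" by (auto simp: lex_standard_complex_def)
    then show ?thesis
      using 1 mem_lex_standard_complex_remove_max[of \<tau> V] by simp
  next
    case 2
    then have "\<sigma> \<subseteq> E - {m}" by (auto simp: lex_standard_complex_def)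
    then have "insert m \<sigma> \<subseteq> E" "insert m \<sigma> - {m} = \<sigma>" using max_in_E by auto
    then show ?thesis
      using 2 mem_lex_standard_complex_remove_max[of "insert m \<sigma>" V] by simp
  qed
qed

end

theorem theorem1p1:
  fixes E :: "nat set" and \<B> :: "nat set set" and m :: nat
  assumes "matroid_bases E \<B>" and "E \<noteq> {}" and "m = Max E"
  shows "(\<not> is_loop \<B> m \<and> \<not> is_coloop \<B> m \<longrightarrow>
            lex_standard_complex E \<B> =
              lex_standard_complex (E - {m}) (del_bases \<B> m)
              \<union> lex_standard_complex (E - {m}) (con_bases \<B> m)
              \<union> cone m (lex_standard_complex (E - {m}) (del_bases \<B> m)
                         \<inter> lex_standard_complex (E - {m}) (con_bases \<B> m)))
       \<and> (is_coloop \<B> m \<longrightarrow>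
            lex_standard_complex E \<B> = lex_standard_complex (E - {m}) (del_bases \<B> m))
       \<and> (is_loop \<B> m \<longrightarrow>
            lex_standard_complex E \<B> = lex_standard_complex (E - {m}) (con_bases \<B> m))"
proof -
  have "finite E" using assms(1) by (simp add: matroid_bases_def)
  then interpret finite_with_max E m
    using assms(2,3) by unfold_locales simp_all
  have "lex_standard_complex (E - {m}) {} = {}" "cone m {} = {}"
    using finite_E by (simp_all add: lex_standard_complex_no_points cone_def)
  moreover have "del_bases \<B> m = avoiding m \<B>" if "\<not> is_coloop \<B> m"
    using that by (simp add: del_bases_def avoiding_def)
  moreover have "con_bases \<B> m = link m \<B>" if "\<not> is_loop \<B> m"
    using that by (simp add: con_bases_def link_def)
  moreover have "avoiding m \<B> = {}" "del_bases \<B> m = link m \<B>" if "is_coloop \<B> m"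
    using that by (auto simp: is_coloop_def del_bases_def avoiding_def link_def)
  moreover have "link m \<B> = {}" "con_bases \<B> m = avoiding m \<B>" if "is_loop \<B> m"
    using that by (auto simp: is_loop_def con_bases_def avoiding_def link_def)
  ultimately show ?thesis
    using lex_standard_complex_remove_max[of \<B>] by auto
qed

end
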